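(* Let $(X(t))_{t\ge 0}$ be a reversible irreducible continuous-time Markov chain on a finite state space $\Omega$ with semigroup $P_t$ and stationary distribution $\pi$. Define \[ d^H(t):=\max_{x\in\Omega}\sqrt{\sum_{y\in\Omega}\Big(\sqrt{P_t(x,y)}-\sqrt{\pi(y)}\Big)^2}. \] Then for every $t\ge 0$, \[ d^H(2t)\le 7\,\big(d^H(t)\big)^{5/4}. \] *)

theory Defs
  imports Complex_Main
begin

text \<open>A continuous-time Markov chain on a finite state space 'a is given by its
generator (Q-matrix) Q. Its semigroup is P_t = exp(t Q), defined by the
exponential series with matrix powers of Q.\<close>

fun ctmc_mpow :: "('a::finite \<Rightarrow> 'a \<Rightarrow> real) \<Rightarrow> nat \<Rightarrow> 'a \<Rightarrow> 'a \<Rightarrow> real" where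
  "ctmc_mpow Q 0 x y = (if x = y then 1 else 0)"
| "ctmc_mpow Q (Suc n) x y = (\<Sum>z\<in>UNIV. Q x z * ctmc_mpow Q n z y)"

definition ctmc_semigroup :: "('a::finite \<Rightarrow> 'a \<Rightarrow> real) \<Rightarrow> real \<Rightarrow> 'a \<Rightarrow> 'a \<Rightarrow> real" where
  "ctmc_semigroup Q t x y = (\<Sum>n. t ^ n / fact n * ctmc_mpow Q n x y)"

definition ctmc_generator :: "('a::finite \<Rightarrow> 'a \<Rightarrow> real) \<Rightarrow> bool" where
  "ctmc_generator Q \<longleftrightarrow> (\<forall>x y. x \<noteq> y \<longrightarrow> Q x y \<ge> 0) \<and> (\<forall>x. (\<Sum>y\<in>UNIV. Q x y) = 0)"

definition ctmc_irreducible :: "('a::finite \<Rightarrow> 'a \<Rightarrow> real) \<Rightarrow> bool" where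
  "ctmc_irreducible Q \<longleftrightarrow> (\<forall>x y. (\<lambda>u v. u \<noteq> v \<and> Q u v > 0)\<^sup>*\<^sup>* x y)"

definition ctmc_stationary :: "('a::finite \<Rightarrow> 'a \<Rightarrow> real) \<Rightarrow> ('a \<Rightarrow> real) \<Rightarrow> bool" where
  "ctmc_stationary Q \<pi> \<longleftrightarrow> (\<forall>x. \<pi> x \<ge> 0) \<and> (\<Sum>x\<in>UNIV. \<pi> x) = 1 \<and>
     (\<forall>y. (\<Sum>x\<in>UNIV. \<pi> x * Q x y) = 0)"

definition ctmc_reversible :: "('a::finite \<Rightarrow> 'a \<Rightarrow> real) \<Rightarrow> ('a \<Rightarrow> real) \<Rightarrow> bool" where
  "ctmc_reversible Q \<pi> \<longleftrightarrow> (\<forall>x y. \<pi> x * Q x y = \<pi> y * Q y x)"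

definition hellinger_dist :: "('a::finite \<Rightarrow> 'a \<Rightarrow> real) \<Rightarrow> ('a \<Rightarrow> real) \<Rightarrow> real \<Rightarrow> real" where
  "hellinger_dist Q \<pi> t = Max (range (\<lambda>x.
     sqrt (\<Sum>y\<in>UNIV. (sqrt (ctmc_semigroup Q t x y) - sqrt (\<pi> y))^2)))"

end

theory Submission
  imports Defs "HOL-Analysis.Convex"
begin

(* Write P_t(x,z) = pi(z) (1 + g_x(z))^2.  Then d^H(t)^2 = max_x sum_z pi(z) g_x(z)^2, and by
   reversibility also max_z sum_x pi(x) g_x(z)^2.  Chapman-Kolmogorov and reversibility give
   P_2t(x,y) / pi(y) = sum_z pi(z) (1 + g_x(z))^2 (1 + g_y(z))^2, and since the rows of P_t sum to
   one the terms of first order in g cancel: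
     P_2t(x,y) / pi(y) - 1 = 4 <g_x, g_y>_pi + (terms of order three and four in g).
   Cauchy-Schwarz bounds the leading term by 16 d^4 in L^2(pi) and the remainder by 4 d^3 + d^4
   in L^1(pi), where d = d^H(t); since (sqrt u - 1)^2 <= 2 (u - 1 - b)^2 + 2 |b| this yields
   d^H(2t)^2 <= 34 d^4 + 8 d^3.  Together with the trivial bound d^H(2t)^2 <= 2 this gives
   d^H(2t) <= 7 d^(5/4). *)

section \<open>Powers of a generator\<close>

lemma mult_if_delta [simp]:
  "(if x = z then (1::real) else 0) * a = (if x = z then a else 0)"
  "a * (if x = z then (1::real) else 0) = (if x = z then a else 0)"
  by auto

lemma ctmc_mpow_abs_le:
  fixes Q :: "'a::finite \<Rightarrow> 'a \<Rightarrow> real"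
  defines "C \<equiv> (\<Sum>x\<in>UNIV. \<Sum>z\<in>UNIV. \<bar>Q x z\<bar>) + 1"
  shows "\<bar>ctmc_mpow Q n x y\<bar> \<le> C ^ n"
proof (induction n arbitrary: x y)
  case 0
  have "C \<ge> 0" unfolding C_def by (simp add: sum_nonneg add_nonneg_nonneg)
  then show ?case by simp
next
  case (Suc n)
  have row: "(\<Sum>z\<in>UNIV. \<bar>Q x z\<bar>) \<le> C"
    unfolding C_def
    using member_le_sum[of x UNIV "\<lambda>x. \<Sum>z\<in>UNIV. \<bar>Q x z\<bar>"] by (simp add: sum_nonneg)
  have "\<bar>ctmc_mpow Q (Suc n) x y\<bar> \<le> (\<Sum>z\<in>UNIV. \<bar>Q x z\<bar> * \<bar>ctmc_mpow Q n z y\<bar>)"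
    using sum_abs[of "\<lambda>z. Q x z * ctmc_mpow Q n z y" UNIV] by (simp add: abs_mult)
  also have "\<dots> \<le> (\<Sum>z\<in>UNIV. \<bar>Q x z\<bar>) * C ^ n"
    unfolding sum_distrib_right by (rule sum_mono) (simp add: Suc.IH mult_left_mono)
  also have "\<dots> \<le> C * C ^ n"
    using row by (rule mult_right_mono) (unfold C_def, simp add: sum_nonneg add_nonneg_nonneg)
  finally show ?case by simp
qed

lemma summable_abs_ctmc_series:
  fixes Q :: "'a::finite \<Rightarrow> 'a \<Rightarrow> real"
  shows "summable (\<lambda>n. \<bar>t ^ n / fact n * ctmc_mpow Q n x y\<bar>)"
proof -
  define C where "C \<equiv> (\<Sum>x\<in>UNIV. \<Sum>z\<in>UNIV. \<bar>Q x z\<bar>) + 1"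
  have "summable (\<lambda>n. inverse (fact n) * (\<bar>t\<bar> * C) ^ n)" by (rule summable_exp)
  then show ?thesis
  proof (rule summable_comparison_test'[where N=0])
    fix n :: nat
    have "\<bar>t\<bar> ^ n / fact n * \<bar>ctmc_mpow Q n x y\<bar> \<le> \<bar>t\<bar> ^ n / fact n * C ^ n"
      unfolding C_def by (rule mult_left_mono[OF ctmc_mpow_abs_le]) simp
    then show "norm \<bar>t ^ n / fact n * ctmc_mpow Q n x y\<bar> \<le> inverse (fact n) * (\<bar>t\<bar> * C) ^ n"
      by (simp add: abs_mult power_abs power_mult_distrib field_simps)
  qed
qed

lemma summable_ctmc_series:
  fixes Q :: "'a::finite \<Rightarrow> 'a \<Rightarrow> real"
  shows "summable (\<lambda>n. t ^ n / fact n * ctmc_mpow Q n x y)"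
  by (rule summable_rabs_cancel[OF summable_abs_ctmc_series])

lemma ctmc_mpow_add:
  fixes Q :: "'a::finite \<Rightarrow> 'a \<Rightarrow> real"
  shows "ctmc_mpow Q (m + n) x y = (\<Sum>z\<in>UNIV. ctmc_mpow Q m x z * ctmc_mpow Q n z y)"
proof (induction m arbitrary: x)
  case 0
  then show ?case by simp
next
  case (Suc m)
  have "ctmc_mpow Q (Suc m + n) x y
      = (\<Sum>w\<in>UNIV. Q x w * (\<Sum>z\<in>UNIV. ctmc_mpow Q m w z * ctmc_mpow Q n z y))"
    by (simp add: Suc.IH)
  also have "\<dots> = (\<Sum>z\<in>UNIV. (\<Sum>w\<in>UNIV. Q x w * ctmc_mpow Q m w z) * ctmc_mpow Q n z y)"
    by (simp add: sum_distrib_left sum_distrib_right mult.assoc) (rule sum.swap)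
  finally show ?case by simp
qed

lemma ctmc_mpow_Suc_right:
  fixes Q :: "'a::finite \<Rightarrow> 'a \<Rightarrow> real"
  shows "ctmc_mpow Q (Suc n) x y = (\<Sum>z\<in>UNIV. ctmc_mpow Q n x z * Q z y)"
  using ctmc_mpow_add[of Q n 1 x y] by simp

lemma ctmc_mpow_row_sum:
  fixes Q :: "'a::finite \<Rightarrow> 'a \<Rightarrow> real"
  assumes "ctmc_generator Q"
  shows "(\<Sum>y\<in>UNIV. ctmc_mpow Q n x y) = (if n = 0 then 1 else 0)"
proof (cases n)
  case 0
  then show ?thesis by simp
next
  case (Suc m)
  have "(\<Sum>y\<in>UNIV. ctmc_mpow Q (Suc m) x y) = (\<Sum>z\<in>UNIV. ctmc_mpow Q m x z * (\<Sum>y\<in>UNIV. Q z y))"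
    unfolding ctmc_mpow_Suc_right sum_distrib_left by (rule sum.swap)
  also have "\<dots> = 0" using assms by (simp add: ctmc_generator_def)
  finally show ?thesis using Suc by simp
qed

lemma ctmc_mpow_reversible:
  fixes Q :: "'a::finite \<Rightarrow> 'a \<Rightarrow> real"
  assumes "ctmc_reversible Q \<pi>"
  shows "\<pi> x * ctmc_mpow Q n x y = \<pi> y * ctmc_mpow Q n y x"
proof (induction n arbitrary: y)
  case 0
  then show ?case by simp
next
  case (Suc n)
  have "\<pi> x * ctmc_mpow Q (Suc n) x y = (\<Sum>z\<in>UNIV. (\<pi> x * ctmc_mpow Q n x z) * Q z y)"
    by (simp only: ctmc_mpow_Suc_right sum_distrib_left mult.assoc)
  also have "\<dots> = (\<Sum>z\<in>UNIV. ctmc_mpow Q n z x * (\<pi> z * Q z y))"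
    by (rule sum.cong[OF refl], subst Suc.IH, simp add: algebra_simps)
  also have "\<dots> = (\<Sum>z\<in>UNIV. ctmc_mpow Q n z x * (\<pi> y * Q y z))"
    using assms by (simp add: ctmc_reversible_def)
  also have "\<dots> = \<pi> y * ctmc_mpow Q (Suc n) y x"
    by (simp add: sum_distrib_left mult.commute mult.left_commute)
  finally show ?case .
qed

lemma ctmc_mpow_nonneg:
  fixes R :: "'a::finite \<Rightarrow> 'a \<Rightarrow> real"
  assumes "\<And>x y. R x y \<ge> 0"
  shows "ctmc_mpow R n x y \<ge> 0"
  by (induction n arbitrary: x) (auto intro!: sum_nonneg mult_nonneg_nonneg assms)

lemma binomial_sum_Suc:
  fixes f :: "nat \<Rightarrow> real"
  shows "(\<Sum>k\<le>n. of_nat (n choose k) * c^(n-k) * f (Suc k)) + c * (\<Sum>k\<le>n. of_nat (n choose k) * c^(n-k) * f k)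
       = (\<Sum>k\<le>Suc n. of_nat (Suc n choose k) * c^(Suc n - k) * f k)"
proof -
  define h where "h k = of_nat (n choose k) * c^(Suc n - k) * f k" for k
  have "c * (\<Sum>k\<le>n. of_nat (n choose k) * c^(n-k) * f k) = (\<Sum>k\<le>Suc n. h k)"
    by (simp add: h_def sum_distrib_left Suc_diff_le algebra_simps)
  also have "\<dots> = c^(Suc n) * f 0 + (\<Sum>k\<le>n. of_nat (n choose Suc k) * c^(n-k) * f (Suc k))"
    by (subst sum.atMost_Suc_shift) (simp add: h_def)
  finally have shifted: "c * (\<Sum>k\<le>n. of_nat (n choose k) * c^(n-k) * f k)
      = c^(Suc n) * f 0 + (\<Sum>k\<le>n. of_nat (n choose Suc k) * c^(n-k) * f (Suc k))" .
  have "(\<Sum>k\<le>Suc n. of_nat (Suc n choose k) * c^(Suc n - k) * f k)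
     = c^(Suc n) * f 0 + (\<Sum>k\<le>n. (of_nat (n choose k) + of_nat (n choose Suc k)) * c^(n-k) * f (Suc k))"
    by (subst sum.atMost_Suc_shift) simp
  then show ?thesis unfolding shifted by (simp add: algebra_simps sum.distrib)
qed

lemma ctmc_mpow_add_diagonal:
  fixes R :: "'a::finite \<Rightarrow> 'a \<Rightarrow> real"
  shows "ctmc_mpow (\<lambda>x y. R x y + c * (if x = y then 1 else 0)) k x y
       = (\<Sum>i\<le>k. of_nat (k choose i) * c^(k-i) * ctmc_mpow R i x y)"
proof (induction k arbitrary: x)
  case 0
  then show ?case by simp
next
  case (Suc k)
  define S where "S = (\<lambda>x y. R x y + c * (if x = y then 1 else 0))"
  have "ctmc_mpow S (Suc k) x y = (\<Sum>z\<in>UNIV. R x z * ctmc_mpow S k z y) + c * ctmc_mpow S k x y"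
    by (simp add: S_def distrib_right sum.distrib mult.assoc if_distrib[where f="\<lambda>u. u * _"] cong: if_cong)
  also have "\<dots> = (\<Sum>z\<in>UNIV. R x z * (\<Sum>i\<le>k. of_nat (k choose i) * c^(k-i) * ctmc_mpow R i z y))
       + c * (\<Sum>i\<le>k. of_nat (k choose i) * c^(k-i) * ctmc_mpow R i x y)"
    unfolding S_def Suc.IH ..
  also have "(\<Sum>z\<in>UNIV. R x z * (\<Sum>i\<le>k. of_nat (k choose i) * c^(k-i) * ctmc_mpow R i z y))
     = (\<Sum>i\<le>k. of_nat (k choose i) * c^(k-i) * ctmc_mpow R (Suc i) x y)"
    by (simp add: sum_distrib_left sum_distrib_right algebra_simps) (rule sum.swap)
  finally show ?case unfolding S_def using binomial_sum_Suc[of k c "\<lambda>i. ctmc_mpow R i x y"] by simp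
qed

section \<open>The semigroup\<close>

lemma ctmc_semigroup_row_sum:
  fixes Q :: "'a::finite \<Rightarrow> 'a \<Rightarrow> real"
  assumes "ctmc_generator Q"
  shows "(\<Sum>y\<in>UNIV. ctmc_semigroup Q t x y) = 1"
proof -
  have "(\<Sum>y\<in>UNIV. ctmc_semigroup Q t x y) = (\<Sum>n. \<Sum>y\<in>UNIV. t ^ n / fact n * ctmc_mpow Q n x y)"
    unfolding ctmc_semigroup_def by (rule suminf_sum[symmetric]) (rule summable_ctmc_series)
  also have "\<dots> = (\<Sum>n. if n = 0 then 1 else 0)"
    by (simp only: sum_distrib_left[symmetric] ctmc_mpow_row_sum[OF assms])
       (rule arg_cong[where f=suminf], auto)
  also have "\<dots> = 1"
    using sums_single[of 0 "\<lambda>_. 1::real"] by (simp add: sums_iff)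
  finally show ?thesis .
qed

lemma ctmc_semigroup_reversible:
  fixes Q :: "'a::finite \<Rightarrow> 'a \<Rightarrow> real"
  assumes "ctmc_reversible Q \<pi>"
  shows "\<pi> x * ctmc_semigroup Q t x y = \<pi> y * ctmc_semigroup Q t y x"
proof -
  have "\<pi> x * ctmc_semigroup Q t x y = (\<Sum>n. t ^ n / fact n * (\<pi> x * ctmc_mpow Q n x y))"
    unfolding ctmc_semigroup_def
    by (subst suminf_mult[OF summable_ctmc_series, symmetric]) (simp add: algebra_simps)
  also have "\<dots> = (\<Sum>n. t ^ n / fact n * (\<pi> y * ctmc_mpow Q n y x))"
    by (simp add: ctmc_mpow_reversible[OF assms])
  also have "\<dots> = \<pi> y * ctmc_semigroup Q t y x"
    unfolding ctmc_semigroup_def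
    by (subst suminf_mult[OF summable_ctmc_series, symmetric]) (simp add: algebra_simps)
  finally show ?thesis .
qed

lemma ctmc_semigroup_add:
  fixes Q :: "'a::finite \<Rightarrow> 'a \<Rightarrow> real"
  shows "ctmc_semigroup Q (s + t) x y = (\<Sum>z\<in>UNIV. ctmc_semigroup Q s x z * ctmc_semigroup Q t z y)"
proof -
  define c where "c i j = s ^ i / fact i * (t ^ j / fact j)" for i j
  have binomial: "(s + t) ^ k / fact k = (\<Sum>i\<le>k. c i (k - i))" for k
    using exp_series_add_commuting[of s t k] by (simp add: c_def divide_inverse mult.commute)
  have "(\<Sum>z\<in>UNIV. ctmc_semigroup Q s x z * ctmc_semigroup Q t z y)
      = (\<Sum>z\<in>UNIV. \<Sum>k. \<Sum>i\<le>k. c i (k - i) * (ctmc_mpow Q i x z * ctmc_mpow Q (k - i) z y))"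
    unfolding ctmc_semigroup_def
    by (rule sum.cong[OF refl], subst Cauchy_product)
       (simp_all only: real_norm_def summable_abs_ctmc_series, simp add: c_def mult_ac)
  also have "\<dots> = (\<Sum>k. \<Sum>z\<in>UNIV. \<Sum>i\<le>k. c i (k - i) * (ctmc_mpow Q i x z * ctmc_mpow Q (k - i) z y))"
  proof (rule suminf_sum[symmetric])
    fix z
    have "summable (\<lambda>k. \<Sum>i\<le>k. (s ^ i / fact i * ctmc_mpow Q i x z) * (t ^ (k - i) / fact (k - i) * ctmc_mpow Q (k - i) z y))"
      by (rule summable_Cauchy_product) (simp_all only: real_norm_def summable_abs_ctmc_series)
    then show "summable (\<lambda>k. \<Sum>i\<le>k. c i (k - i) * (ctmc_mpow Q i x z * ctmc_mpow Q (k - i) z y))"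
      by (simp add: c_def mult_ac)
  qed
  also have "\<dots> = (\<Sum>k. (s + t) ^ k / fact k * ctmc_mpow Q k x y)"
  proof (rule arg_cong[where f=suminf], rule ext)
    fix k
    have "(\<Sum>z\<in>UNIV. \<Sum>i\<le>k. c i (k - i) * (ctmc_mpow Q i x z * ctmc_mpow Q (k - i) z y))
        = (\<Sum>i\<le>k. c i (k - i) * ctmc_mpow Q (i + (k - i)) x y)"
      unfolding ctmc_mpow_add sum_distrib_left by (rule sum.swap)
    also have "\<dots> = (s + t) ^ k / fact k * ctmc_mpow Q k x y"
      unfolding binomial sum_distrib_right by simp
    finally show "(\<Sum>z\<in>UNIV. \<Sum>i\<le>k. c i (k - i) * (ctmc_mpow Q i x z * ctmc_mpow Q (k - i) z y))
        = (s + t) ^ k / fact k * ctmc_mpow Q k x y" .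
  qed
  finally show ?thesis unfolding ctmc_semigroup_def by simp
qed

text \<open>With \<open>c\<close> large, \<open>R = Q + c I\<close> is entrywise nonnegative and
  \<open>exp (t Q) = exp (- c t) exp (t R)\<close>, the product being a Cauchy product of series.\<close>

lemma ctmc_semigroup_nonneg:
  fixes Q :: "'a::finite \<Rightarrow> 'a \<Rightarrow> real"
  assumes gen: "ctmc_generator Q" and t: "t \<ge> 0"
  shows "ctmc_semigroup Q t x y \<ge> 0"
proof -
  define c where "c = (\<Sum>x\<in>UNIV. \<bar>Q x x\<bar>)"
  define R where "R = (\<lambda>x y. Q x y + c * (if x = y then 1 else 0))"
  have R_nonneg: "R x y \<ge> 0" for x y
  proof (cases "x = y")
    case True
    have "\<bar>Q x x\<bar> \<le> c"
      unfolding c_def by (rule member_le_sum[where f="\<lambda>x. \<bar>Q x x\<bar>"]) auto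
    then show ?thesis using True by (simp add: R_def)
  next
    case False
    then show ?thesis using gen by (simp add: R_def ctmc_generator_def)
  qed
  have Q_eq: "Q = (\<lambda>x y. R x y + (-c) * (if x = y then 1 else 0))"
    by (intro ext) (simp add: R_def)
  define a where "a i = t ^ i / fact i * ctmc_mpow R i x y" for i
  define b where "b j = (- c * t) ^ j / fact j" for j
  have a_summable: "summable (\<lambda>k. norm (a k))"
    unfolding a_def real_norm_def by (rule summable_abs_ctmc_series)
  have b_summable: "summable (\<lambda>k. norm (b k))"
    using summable_exp[of "\<bar>- c * t\<bar>"]
    by (simp add: b_def power_abs divide_inverse mult.commute abs_mult)
  have series_term: "t ^ n / fact n * (of_nat (n choose i) * (-c) ^ (n - i) * ctmc_mpow R i x y) = a i * b (n - i)"
    if "i \<le> n" for i n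
  proof -
    have "t ^ n = t ^ i * t ^ (n - i)" using that by (simp flip: power_add)
    then show ?thesis
      by (simp add: a_def b_def binomial_fact[OF that] power_mult_distrib field_simps
            power_minus[of "c*t"] power_minus[of c])
  qed
  have "ctmc_semigroup Q t x y = (\<Sum>n. \<Sum>i\<le>n. a i * b (n - i))"
    unfolding ctmc_semigroup_def
    by (subst Q_eq, subst ctmc_mpow_add_diagonal)
       (simp only: sum_distrib_left, intro arg_cong[where f=suminf] ext sum.cong refl series_term, simp)
  also have "\<dots> = (\<Sum>n. a n) * exp (- c * t)"
    using Cauchy_product[OF a_summable b_summable] exp_converges[of "- c * t"]
    by (simp add: b_def sums_iff divide_inverse mult.commute)
  also have "(\<Sum>n. a n) \<ge> 0"
    unfolding a_def
    by (rule suminf_nonneg[OF summable_ctmc_series]) (simp add: t ctmc_mpow_nonneg[OF R_nonneg])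
  then have "(\<Sum>n. a n) * exp (- c * t) \<ge> 0" by simp
  finally show ?thesis by simp
qed

lemma weighted_Cauchy_Schwarz:
  fixes w f g :: "'a::finite \<Rightarrow> real"
  assumes "\<And>z. w z \<ge> 0"
  shows "(\<Sum>z\<in>UNIV. w z * f z * g z)^2 \<le> (\<Sum>z\<in>UNIV. w z * (f z)^2) * (\<Sum>z\<in>UNIV. w z * (g z)^2)"
proof -
  have "(\<Sum>z\<in>UNIV. (sqrt (w z) * f z) * (sqrt (w z) * g z))^2
        \<le> (\<Sum>z\<in>UNIV. (sqrt (w z) * f z)^2) * (\<Sum>z\<in>UNIV. (sqrt (w z) * g z)^2)"
    by (rule Cauchy_Schwarz_ineq_sum)
  moreover have "\<And>z. (sqrt (w z) * f z) * (sqrt (w z) * g z) = w z * f z * g z"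
    using assms by (simp add: algebra_simps real_sqrt_mult_self)
  moreover have "\<And>h z. (sqrt (w z) * h z)^2 = w z * (h z)^2"
    using assms by (simp add: power_mult_distrib)
  ultimately show ?thesis by simp
qed

lemma weighted_abs_sum_le:
  fixes w f :: "'a::finite \<Rightarrow> real"
  assumes "\<And>z. w z \<ge> 0" "(\<Sum>z\<in>UNIV. w z) = 1" "(\<Sum>z\<in>UNIV. w z * (f z)^2) \<le> d^2" "d \<ge> 0"
  shows "(\<Sum>z\<in>UNIV. w z * \<bar>f z\<bar>) \<le> d"
proof -
  have "(\<Sum>z\<in>UNIV. w z * \<bar>f z\<bar> * 1)^2 \<le> (\<Sum>z\<in>UNIV. w z * \<bar>f z\<bar>^2) * (\<Sum>z\<in>UNIV. w z * 1^2)"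
    by (rule weighted_Cauchy_Schwarz) (rule assms)
  then have "(\<Sum>z\<in>UNIV. w z * \<bar>f z\<bar>)^2 \<le> d^2" using assms(2,3) by simp
  then show ?thesis using assms(4) by (rule power2_le_imp_le)
qed

lemma sqrt_diff_square_le:
  assumes "u \<ge> 0" "v \<ge> 0"
  shows "(sqrt u - sqrt v)^2 \<le> \<bar>u - v\<bar>"
proof -
  have "\<bar>sqrt u - sqrt v\<bar> \<le> sqrt u + sqrt v"
    using real_sqrt_ge_zero[OF assms(1)] real_sqrt_ge_zero[OF assms(2)] by linarith
  then have "\<bar>sqrt u - sqrt v\<bar> * \<bar>sqrt u - sqrt v\<bar> \<le> \<bar>sqrt u - sqrt v\<bar> * (sqrt u + sqrt v)"
    by (rule mult_left_mono) simp
  also have "\<dots> = \<bar>(sqrt u - sqrt v) * (sqrt u + sqrt v)\<bar>"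
    using assms by (simp add: abs_mult)
  also have "(sqrt u - sqrt v) * (sqrt u + sqrt v) = u - v"
    using assms by (simp add: algebra_simps)
  finally show ?thesis by (simp add: power2_eq_square)
qed

lemma abs_sqrt_minus_one_le:
  assumes "v \<ge> (0::real)"
  shows "\<bar>sqrt v - 1\<bar> \<le> \<bar>v - 1\<bar>"
proof -
  have "(sqrt v - 1) * (sqrt v + 1) = v - 1" using assms by (simp add: algebra_simps)
  then have "\<bar>sqrt v - 1\<bar> * (sqrt v + 1) = \<bar>v - 1\<bar>"
    by (metis abs_mult abs_of_nonneg add_nonneg_nonneg real_sqrt_ge_zero zero_le_one assms)
  moreover have "\<bar>sqrt v - 1\<bar> \<le> \<bar>sqrt v - 1\<bar> * (sqrt v + 1)"
    using assms by (simp add: mult_le_cancel_left1)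
  ultimately show ?thesis by simp
qed

text \<open>\<open>(sqrt u - 1)\<^sup>2\<close> is quadratic in \<open>u - 1\<close> near \<open>u = 1\<close> and linear far from it,
  so a perturbation \<open>b\<close> of \<open>u\<close> costs only \<open>\<bar>b\<bar>\<close>.\<close>

lemma sqrt_minus_one_square_le:
  fixes u b :: real
  assumes "u \<ge> 0"
  shows "(sqrt u - 1)^2 \<le> 2 * (u - 1 - b)^2 + 2 * \<bar>b\<bar>"
proof (cases "\<bar>u - 1 - b\<bar> \<ge> 1/2")
  case True
  have "(sqrt u - 1)^2 \<le> \<bar>u - 1\<bar>" using sqrt_diff_square_le[OF assms, of 1] by simp
  also have "\<dots> \<le> \<bar>u - 1 - b\<bar> + \<bar>b\<bar>" by simp
  also have "\<bar>u - 1 - b\<bar> \<le> 2 * (u - 1 - b)^2"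
  proof -
    have "\<bar>u - 1 - b\<bar> * 1 \<le> \<bar>u - 1 - b\<bar> * (2 * \<bar>u - 1 - b\<bar>)"
      using True by (intro mult_left_mono) auto
    then show ?thesis by (simp add: power2_eq_square)
  qed
  finally show ?thesis by simp
next
  case False
  define v where "v = u - b"
  have v: "v \<ge> 0" using False unfolding v_def by (auto simp: abs_if split: if_splits)
  have "(sqrt u - sqrt v)^2 \<le> \<bar>b\<bar>" using sqrt_diff_square_le[OF assms v] by (simp add: v_def)
  moreover have "(sqrt v - 1)^2 \<le> (u - 1 - b)^2"
    using abs_sqrt_minus_one_le[OF v] by (simp add: v_def abs_le_square_iff algebra_simps)
  moreover have "(sqrt u - 1)^2 \<le> 2 * (sqrt u - sqrt v)^2 + 2 * (sqrt v - 1)^2"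
    by (smt (verit) zero_le_power2 power2_diff power2_sum)
  ultimately show ?thesis by simp
qed

lemma sqrt_diff_square_eq_ratio:
  fixes p q :: real
  assumes "p \<ge> 0" "q > 0"
  shows "q * (sqrt (p / q) - 1)^2 = (sqrt p - sqrt q)^2"
proof -
  have "q * (sqrt (p / q) - 1)^2 = (sqrt q * (sqrt p / sqrt q - 1))^2"
    using assms by (simp add: real_sqrt_divide power_mult_distrib)
  also have "sqrt q * (sqrt p / sqrt q - 1) = sqrt p - sqrt q"
    using assms by (simp add: field_simps)
  finally show ?thesis .
qed

section \<open>Hellinger distance of a two-step reversible kernel\<close>

definition hellinger_sq :: "('a::finite \<Rightarrow> real) \<Rightarrow> ('a \<Rightarrow> 'a \<Rightarrow> real) \<Rightarrow> 'a \<Rightarrow> real" where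
  "hellinger_sq \<pi> K x = (\<Sum>y\<in>UNIV. (sqrt (K x y) - sqrt (\<pi> y))^2)"

lemma hellinger_sq_nonneg: "hellinger_sq \<pi> K x \<ge> 0"
  unfolding hellinger_sq_def by (simp add: sum_nonneg)

lemma hellinger_sq_le_2:
  fixes K :: "'a::finite \<Rightarrow> 'a \<Rightarrow> real"
  assumes "\<And>y. \<pi> y \<ge> 0" "(\<Sum>y\<in>UNIV. \<pi> y) = 1" "\<And>y. K x y \<ge> 0" "(\<Sum>y\<in>UNIV. K x y) = 1"
  shows "hellinger_sq \<pi> K x \<le> 2"
proof -
  have "hellinger_sq \<pi> K x \<le> (\<Sum>y\<in>UNIV. K x y + \<pi> y)"
    unfolding hellinger_sq_def using assms(1,3) by (intro sum_mono) (simp add: power2_diff)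
  also have "\<dots> = 2" using assms(2,4) by (simp add: sum.distrib)
  finally show ?thesis .
qed

locale reversible_kernel =
  fixes P :: "'a::finite \<Rightarrow> 'a \<Rightarrow> real" and \<pi> :: "'a \<Rightarrow> real"
  assumes pi_pos: "\<And>x. \<pi> x > 0" and pi_sum: "(\<Sum>x\<in>UNIV. \<pi> x) = 1"
    and nonneg: "\<And>x y. P x y \<ge> 0" and row_sum: "\<And>x. (\<Sum>y\<in>UNIV. P x y) = 1"
    and reversible: "\<And>x y. \<pi> x * P x y = \<pi> y * P y x"
begin

lemma pi_nonneg: "\<pi> x \<ge> 0"
  using pi_pos[of x] by simp

definition root_dev :: "'a \<Rightarrow> 'a \<Rightarrow> real" where
  "root_dev x z = sqrt (P x z / \<pi> z) - 1"

lemma density_sym: "P y z / \<pi> z = P z y / \<pi> y"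
  using reversible[of y z] pi_pos[of y] pi_pos[of z] by (simp add: field_simps)

lemma density_eq_root_dev: "P x z / \<pi> z = (1 + root_dev x z)^2"
  unfolding root_dev_def using nonneg[of x z] pi_pos[of z] by simp

lemma hellinger_sq_eq_row: "hellinger_sq \<pi> P x = (\<Sum>z\<in>UNIV. \<pi> z * (root_dev x z)^2)"
  unfolding hellinger_sq_def root_dev_def
  by (simp add: sqrt_diff_square_eq_ratio[OF nonneg pi_pos])

lemma hellinger_sq_eq_column: "hellinger_sq \<pi> P z = (\<Sum>y\<in>UNIV. \<pi> y * (root_dev y z)^2)"
  unfolding hellinger_sq_def
proof (intro sum.cong refl)
  fix y
  show "(sqrt (P z y) - sqrt (\<pi> y))^2 = \<pi> y * (root_dev y z)^2"
    unfolding root_dev_def density_sym[of y z] by (simp add: sqrt_diff_square_eq_ratio[OF nonneg pi_pos])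
qed

lemma root_dev_centred: "(\<Sum>z\<in>UNIV. \<pi> z * (2 * root_dev x z + (root_dev x z)^2)) = 0"
proof -
  have "(\<Sum>z\<in>UNIV. \<pi> z + \<pi> z * (2 * root_dev x z + (root_dev x z)^2))
      = (\<Sum>z\<in>UNIV. \<pi> z * (P x z / \<pi> z))"
    unfolding density_eq_root_dev by (simp add: power2_eq_square algebra_simps)
  also have "\<dots> = 1"
    using pi_pos by (simp add: row_sum less_imp_neq[OF pi_pos, symmetric])
  finally show ?thesis by (simp add: sum.distrib pi_sum)
qed

definition two_step_remainder :: "'a \<Rightarrow> 'a \<Rightarrow> real" where
  "two_step_remainder x y = (\<Sum>z\<in>UNIV. \<pi> z * (2 * root_dev x z * (root_dev y z)^2
     + 2 * (root_dev x z)^2 * root_dev y z + (root_dev x z)^2 * (root_dev y z)^2))"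

text \<open>Reversibility writes the two-step density as a \<open>\<pi>\<close>-inner product of
  \<open>(1 + root_dev x)\<^sup>2\<close> and \<open>(1 + root_dev y)\<^sup>2\<close>; centring kills the first-order terms.\<close>

lemma two_step_density_expansion:
  "(\<Sum>z\<in>UNIV. P x z * P z y) / \<pi> y
     = 1 + 4 * (\<Sum>z\<in>UNIV. \<pi> z * root_dev x z * root_dev y z) + two_step_remainder x y"
proof -
  let ?h = "\<lambda>x z. 2 * root_dev x z + (root_dev x z)^2"
  have "(\<Sum>z\<in>UNIV. P x z * P z y) / \<pi> y = (\<Sum>z\<in>UNIV. \<pi> z * ((P x z / \<pi> z) * (P y z / \<pi> z)))"
    unfolding sum_divide_distrib
  proof (intro sum.cong refl)
    fix z
    have "\<pi> z \<noteq> 0" using pi_pos[of z] by simp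
    then show "P x z * P z y / \<pi> y = \<pi> z * ((P x z / \<pi> z) * (P y z / \<pi> z))"
      unfolding density_sym[of y z] by (simp add: field_simps)
  qed
  also have "\<dots> = (\<Sum>z\<in>UNIV. \<pi> z + \<pi> z * ?h x z + \<pi> z * ?h y z + \<pi> z * ?h x z * ?h y z)"
    unfolding density_eq_root_dev by (simp add: power2_eq_square algebra_simps)
  also have "\<dots> = 1 + (\<Sum>z\<in>UNIV. \<pi> z * ?h x z * ?h y z)"
    by (simp add: sum.distrib pi_sum root_dev_centred)
  also have "(\<Sum>z\<in>UNIV. \<pi> z * ?h x z * ?h y z)
      = 4 * (\<Sum>z\<in>UNIV. \<pi> z * root_dev x z * root_dev y z) + two_step_remainder x y"
    unfolding two_step_remainder_def
    by (simp add: sum_distrib_left sum.distrib[symmetric] power2_eq_square algebra_simps)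
  finally show ?thesis by simp
qed

lemma two_step_hellinger_term_le:
  "(sqrt (\<Sum>z\<in>UNIV. P x z * P z y) - sqrt (\<pi> y))^2
     \<le> \<pi> y * (2 * (4 * (\<Sum>z\<in>UNIV. \<pi> z * root_dev x z * root_dev y z))^2 + 2 * \<bar>two_step_remainder x y\<bar>)"
proof -
  have P2_nonneg: "(\<Sum>z\<in>UNIV. P x z * P z y) \<ge> 0" by (simp add: sum_nonneg nonneg)
  have "(sqrt (\<Sum>z\<in>UNIV. P x z * P z y) - sqrt (\<pi> y))^2
      = \<pi> y * (sqrt ((\<Sum>z\<in>UNIV. P x z * P z y) / \<pi> y) - 1)^2"
    by (rule sqrt_diff_square_eq_ratio[OF P2_nonneg pi_pos, symmetric])
  also have "\<dots> \<le> \<pi> y * (2 * ((\<Sum>z\<in>UNIV. P x z * P z y) / \<pi> y - 1 - two_step_remainder x y)^2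
      + 2 * \<bar>two_step_remainder x y\<bar>)"
    using P2_nonneg pi_nonneg by (intro mult_left_mono sqrt_minus_one_square_le) simp_all
  finally show ?thesis unfolding two_step_density_expansion by simp
qed

context
  fixes d :: real
  assumes hellinger_le: "\<And>x. hellinger_sq \<pi> P x \<le> d^2" and d_nonneg: "d \<ge> 0"
begin

lemma row_root_dev_le: "(\<Sum>z\<in>UNIV. \<pi> z * (root_dev x z)^2) \<le> d^2"
  using hellinger_le[of x] by (simp add: hellinger_sq_eq_row)

lemma column_root_dev_le: "(\<Sum>y\<in>UNIV. \<pi> y * (root_dev y z)^2) \<le> d^2"
  using hellinger_le[of z] by (simp add: hellinger_sq_eq_column)

lemma two_step_leading_term_le:
  "(\<Sum>y\<in>UNIV. \<pi> y * (4 * (\<Sum>z\<in>UNIV. \<pi> z * root_dev x z * root_dev y z))^2) \<le> 16 * d^4"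
proof -
  have "\<pi> y * (4 * (\<Sum>z\<in>UNIV. \<pi> z * root_dev x z * root_dev y z))^2
      \<le> \<pi> y * (16 * d^2 * (\<Sum>z\<in>UNIV. \<pi> z * (root_dev y z)^2))" for y
  proof -
    have "(4 * (\<Sum>z\<in>UNIV. \<pi> z * root_dev x z * root_dev y z))^2
        \<le> 16 * ((\<Sum>z\<in>UNIV. \<pi> z * (root_dev x z)^2) * (\<Sum>z\<in>UNIV. \<pi> z * (root_dev y z)^2))"
      using weighted_Cauchy_Schwarz[OF pi_nonneg] by (simp add: power_mult_distrib)
    also have "\<dots> \<le> 16 * (d^2 * (\<Sum>z\<in>UNIV. \<pi> z * (root_dev y z)^2))"
      using row_root_dev_le[of x]
      by (intro mult_left_mono mult_right_mono) (auto intro!: sum_nonneg simp: pi_nonneg)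
    finally show ?thesis by (intro mult_left_mono pi_nonneg) simp
  qed
  then have "(\<Sum>y\<in>UNIV. \<pi> y * (4 * (\<Sum>z\<in>UNIV. \<pi> z * root_dev x z * root_dev y z))^2)
      \<le> (\<Sum>y\<in>UNIV. \<pi> y * (16 * d^2 * (\<Sum>z\<in>UNIV. \<pi> z * (root_dev y z)^2)))"
    by (rule sum_mono)
  also have "\<dots> = 16 * d^2 * (\<Sum>z\<in>UNIV. \<pi> z * (\<Sum>y\<in>UNIV. \<pi> y * (root_dev y z)^2))"
    by (simp add: sum_distrib_left algebra_simps) (subst sum.swap, simp add: mult_ac)
  also have "\<dots> \<le> 16 * d^2 * (\<Sum>z\<in>UNIV. \<pi> z * d^2)"
    by (intro mult_left_mono sum_mono) (auto simp: column_root_dev_le pi_nonneg)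
  also have "\<dots> = 16 * d^4"
    by (simp add: sum_distrib_right[symmetric] pi_sum power4_eq_xxxx power2_eq_square)
  finally show ?thesis .
qed

lemma two_step_remainder_le:
  "(\<Sum>y\<in>UNIV. \<pi> y * \<bar>two_step_remainder x y\<bar>) \<le> 4 * d^3 + d^4"
proof -
  let ?g = root_dev
  define T where "T y z = 2 * \<bar>?g x z\<bar> * (?g y z)^2 + 2 * (?g x z)^2 * \<bar>?g y z\<bar> + (?g x z)^2 * (?g y z)^2"
    for y z
  have abs_col: "(\<Sum>y\<in>UNIV. \<pi> y * \<bar>?g y z\<bar>) \<le> d" for z
    by (rule weighted_abs_sum_le[OF pi_nonneg pi_sum column_root_dev_le d_nonneg])
  have "\<bar>two_step_remainder x y\<bar> \<le> (\<Sum>z\<in>UNIV. \<pi> z * T y z)" for y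
    unfolding two_step_remainder_def
  proof (rule order_trans[OF sum_abs sum_mono])
    fix z
    have "\<bar>2 * ?g x z * (?g y z)^2 + 2 * (?g x z)^2 * ?g y z + (?g x z)^2 * (?g y z)^2\<bar> \<le> T y z"
      unfolding T_def by (rule order_trans[OF abs_triangle_ineq] add_mono order_trans[OF abs_triangle_ineq])+
         (simp_all add: abs_mult)
    then show "\<bar>\<pi> z * (2 * ?g x z * (?g y z)^2 + 2 * (?g x z)^2 * ?g y z + (?g x z)^2 * (?g y z)^2)\<bar>
        \<le> \<pi> z * T y z"
      by (simp add: abs_mult abs_of_nonneg pi_nonneg mult_left_mono)
  qed
  then have "(\<Sum>y\<in>UNIV. \<pi> y * \<bar>two_step_remainder x y\<bar>) \<le> (\<Sum>y\<in>UNIV. \<pi> y * (\<Sum>z\<in>UNIV. \<pi> z * T y z))"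
    by (intro sum_mono mult_left_mono pi_nonneg)
  also have "\<dots> = (\<Sum>z\<in>UNIV. \<pi> z * (\<Sum>y\<in>UNIV. \<pi> y * T y z))"
    by (simp add: sum_distrib_left mult_ac) (subst sum.swap, simp add: mult_ac)
  also have "\<dots> = (\<Sum>z\<in>UNIV. \<pi> z * (2 * \<bar>?g x z\<bar> * (\<Sum>y\<in>UNIV. \<pi> y * (?g y z)^2)
       + 2 * (?g x z)^2 * (\<Sum>y\<in>UNIV. \<pi> y * \<bar>?g y z\<bar>) + (?g x z)^2 * (\<Sum>y\<in>UNIV. \<pi> y * (?g y z)^2)))"
    unfolding T_def by (intro sum.cong refl) (simp add: sum_distrib_left sum.distrib algebra_simps)
  also have "\<dots> \<le> (\<Sum>z\<in>UNIV. \<pi> z * (2 * \<bar>?g x z\<bar> * d^2 + 2 * (?g x z)^2 * d + (?g x z)^2 * d^2))"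
    by (intro sum_mono mult_left_mono add_mono column_root_dev_le abs_col pi_nonneg) simp_all
  also have "\<dots> = 2 * d^2 * (\<Sum>z\<in>UNIV. \<pi> z * \<bar>?g x z\<bar>) + (2 * d + d^2) * (\<Sum>z\<in>UNIV. \<pi> z * (?g x z)^2)"
    by (simp add: sum_distrib_left sum.distrib algebra_simps)
  also have "\<dots> \<le> 2 * d^2 * d + (2 * d + d^2) * d^2"
    by (intro add_mono mult_left_mono row_root_dev_le
          weighted_abs_sum_le[OF pi_nonneg pi_sum row_root_dev_le d_nonneg]) (simp_all add: d_nonneg)
  also have "\<dots> = 4 * d^3 + d^4"
    by (simp add: power2_eq_square power3_eq_cube power4_eq_xxxx algebra_simps)
  finally show ?thesis .
qed

lemma hellinger_sq_two_step_le:
  "hellinger_sq \<pi> (\<lambda>x y. \<Sum>z\<in>UNIV. P x z * P z y) x \<le> 34 * d^4 + 8 * d^3"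
proof -
  have "hellinger_sq \<pi> (\<lambda>x y. \<Sum>z\<in>UNIV. P x z * P z y) x
      \<le> (\<Sum>y\<in>UNIV. \<pi> y * (2 * (4 * (\<Sum>z\<in>UNIV. \<pi> z * root_dev x z * root_dev y z))^2
                               + 2 * \<bar>two_step_remainder x y\<bar>))"
    unfolding hellinger_sq_def by (intro sum_mono two_step_hellinger_term_le)
  also have "\<dots> = 2 * (\<Sum>y\<in>UNIV. \<pi> y * (4 * (\<Sum>z\<in>UNIV. \<pi> z * root_dev x z * root_dev y z))^2)
      + 2 * (\<Sum>y\<in>UNIV. \<pi> y * \<bar>two_step_remainder x y\<bar>)"
    by (simp add: sum_distrib_left sum.distrib algebra_simps)
  also have "\<dots> \<le> 2 * (16 * d^4) + 2 * (4 * d^3 + d^4)"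
    using two_step_leading_term_le two_step_remainder_le by (intro add_mono mult_left_mono) simp_all
  finally show ?thesis by simp
qed

end

end

section \<open>Application to the chain\<close>

lemma ctmc_stationary_pos:
  fixes Q :: "'a::finite \<Rightarrow> 'a \<Rightarrow> real"
  assumes gen: "ctmc_generator Q" and irr: "ctmc_irreducible Q" and st: "ctmc_stationary Q \<pi>"
  shows "\<pi> y > 0"
proof (rule ccontr)
  have nonneg: "\<pi> x \<ge> 0" for x using st by (simp add: ctmc_stationary_def)
  assume "\<not> \<pi> y > 0"
  then have "\<pi> y = 0" using nonneg[of y] by linarith
  \<comment> \<open>Mass flows into a null state only from null states, so nullity propagates backwards along the chain.\<close>
  have null: "\<pi> u = 0" if "(\<lambda>u v. u \<noteq> v \<and> Q u v > 0)\<^sup>*\<^sup>* u y" for u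
    using that
  proof (induction rule: converse_rtranclp_induct)
    case base
    show ?case by fact
  next
    case (step u v)
    have flow_nonneg: "\<pi> x * Q x v \<ge> 0" for x
      using gen nonneg[of x] step.IH by (cases "x = v") (simp_all add: ctmc_generator_def)
    have "(\<Sum>x\<in>UNIV. \<pi> x * Q x v) = 0" using st by (simp add: ctmc_stationary_def)
    then have "\<pi> u * Q u v = 0"
      using flow_nonneg sum_nonneg_eq_0_iff[of UNIV "\<lambda>x. \<pi> x * Q x v"] by simp
    then show ?case using step.hyps(1) by simp
  qed
  then have "\<forall>u. \<pi> u = 0" using irr by (simp add: ctmc_irreducible_def)
  then show False using st by (simp add: ctmc_stationary_def)
qed

lemma reversible_kernel_ctmc_semigroup:
  fixes Q :: "'a::finite \<Rightarrow> 'a \<Rightarrow> real"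
  assumes "ctmc_generator Q" "ctmc_irreducible Q" "ctmc_stationary Q \<pi>" "ctmc_reversible Q \<pi>" "t \<ge> 0"
  shows "reversible_kernel (ctmc_semigroup Q t) \<pi>"
  using assms ctmc_stationary_pos[OF assms(1-3)]
  by unfold_locales
     (simp_all add: ctmc_stationary_def ctmc_semigroup_nonneg ctmc_semigroup_row_sum ctmc_semigroup_reversible)

lemma hellinger_dist_eq_Max:
  "hellinger_dist Q \<pi> t = Max (range (\<lambda>x. sqrt (hellinger_sq \<pi> (ctmc_semigroup Q t) x)))"
  unfolding hellinger_dist_def hellinger_sq_def ..

lemma hellinger_dist_attained:
  obtains x where "hellinger_dist Q \<pi> t = sqrt (hellinger_sq \<pi> (ctmc_semigroup Q t) x)"
proof -
  have "hellinger_dist Q \<pi> t \<in> range (\<lambda>x. sqrt (hellinger_sq \<pi> (ctmc_semigroup Q t) x))"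
    unfolding hellinger_dist_eq_Max by (rule Max_in) auto
  then show ?thesis using that by blast
qed

lemma hellinger_dist_nonneg: "hellinger_dist Q \<pi> t \<ge> 0"
proof -
  obtain x where "hellinger_dist Q \<pi> t = sqrt (hellinger_sq \<pi> (ctmc_semigroup Q t) x)"
    by (rule hellinger_dist_attained)
  then show ?thesis using hellinger_sq_nonneg by simp
qed

lemma hellinger_sq_le_hellinger_dist:
  "hellinger_sq \<pi> (ctmc_semigroup Q t) x \<le> (hellinger_dist Q \<pi> t)^2"
proof -
  have "sqrt (hellinger_sq \<pi> (ctmc_semigroup Q t) x) \<le> hellinger_dist Q \<pi> t"
    unfolding hellinger_dist_eq_Max by (rule Max_ge) auto
  then have "(sqrt (hellinger_sq \<pi> (ctmc_semigroup Q t) x))^2 \<le> (hellinger_dist Q \<pi> t)^2"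
    by (rule power_mono) (simp add: hellinger_sq_nonneg)
  then show ?thesis by (simp add: hellinger_sq_nonneg)
qed

lemma sqrt_le_7_powr_5_4:
  fixes d h :: real
  assumes "d \<ge> 0" "h \<le> 2" "h \<le> 34 * d^4 + 8 * d^3"
  shows "sqrt h \<le> 7 * d powr (5/4)"
proof (cases "d \<ge> 1")
  case True
  have "sqrt h \<le> sqrt 2" using assms(2) by simp
  also have "\<dots> \<le> 7" by (simp add: real_sqrt_le_iff[of 2 "7^2", simplified])
  also have "7 \<le> 7 * d powr (5/4)" using ge_one_powr_ge_zero[OF True, of "5/4"] by simp
  finally show ?thesis .
next
  case False
  have "d^4 \<le> d^3" using False assms(1) by (simp add: power_decreasing)
  then have "h \<le> 42 * d powr 3"
    using assms(1,3) by (simp add: powr_realpow'[of d 3, simplified])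
  also have "d powr 3 \<le> d powr (5/2)" using False assms(1) by (intro powr_mono') simp_all
  also have "42 * d powr (5/2) \<le> (7 * d powr (5/4))^2"
    by (simp add: power2_eq_square powr_add[symmetric])
  finally show ?thesis by (intro real_le_lsqrt) simp_all
qed

theorem lemma2p3:
  fixes Q :: "'a::finite \<Rightarrow> 'a \<Rightarrow> real" and \<pi> :: "'a \<Rightarrow> real" and t :: real
  assumes "ctmc_generator Q"
    and "ctmc_irreducible Q"
    and "ctmc_stationary Q \<pi>"
    and "ctmc_reversible Q \<pi>"
    and "t \<ge> 0"
  shows "hellinger_dist Q \<pi> (2 * t) \<le> 7 * (hellinger_dist Q \<pi> t) powr (5/4)"
proof -
  define d where "d = hellinger_dist Q \<pi> t"
  interpret reversible_kernel "ctmc_semigroup Q t" \<pi>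
    by (rule reversible_kernel_ctmc_semigroup[OF assms])
  obtain x where x: "hellinger_dist Q \<pi> (2 * t) = sqrt (hellinger_sq \<pi> (ctmc_semigroup Q (2 * t)) x)"
    by (rule hellinger_dist_attained)
  have "ctmc_semigroup Q (2 * t) = (\<lambda>u v. \<Sum>z\<in>UNIV. ctmc_semigroup Q t u z * ctmc_semigroup Q t z v)"
    by (intro ext) (simp only: mult_2 ctmc_semigroup_add)
  then have "hellinger_sq \<pi> (ctmc_semigroup Q (2 * t)) x \<le> 34 * d^4 + 8 * d^3"
    unfolding d_def by (simp only:)
      (intro hellinger_sq_two_step_le hellinger_sq_le_hellinger_dist hellinger_dist_nonneg)
  moreover have "hellinger_sq \<pi> (ctmc_semigroup Q (2 * t)) x \<le> 2"
    using assms(1,5) by (intro hellinger_sq_le_2 pi_nonneg pi_sum ctmc_semigroup_nonneg ctmc_semigroup_row_sum) simp_all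
  ultimately show ?thesis
    unfolding x d_def by (intro sqrt_le_7_powr_5_4 hellinger_dist_nonneg)
qed

end
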